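(* Let $J=(a,b)$ be a bounded interval and let $\gamma=(x,y)\in H^2(J;\mathbb{R}^2)$ be a regular curve such that $x'(t)\ge0$ for all $t\in J$ and $y'(t_0)=0$ for some $t_0\in J$. Then $$\int_\gamma\kappa^2\,ds\ \ge\ \frac{[f(\theta(a))+f(\theta(b))]^2}{x(b)-x(a)}.$$
   Context: Here $\kappa$ is the curvature and $s$ the arc length of $\gamma$ (so $\int_\gamma\kappa^2ds=\int|\gamma_{ss}|^2ds$). Regular means $|\dot\gamma(t)|>0$ for all $t\in\bar J$ (the curve is $C^1$ on $\bar J$). For $t\in\bar J$, the tangential angle $\theta(t)\in(-\pi,\pi]$ is defined by $\dot\gamma(t)=|\dot\gamma(t)|(\cos\theta(t),\sin\theta(t))$. The function $f$ is the nonnegative even function $f(\theta)=\left|\int_0^\theta\sqrt{\cos\varphi}\,d\varphi\right|=\int_0^{|\theta|}\sqrt{\cos\varphi}\,d\varphi$. *)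

theory Defs
  imports "HOL-Analysis.Analysis"
begin

text \<open>Scalar Sobolev H^2 function on the bounded interval (a,b), with its (classical) first
  derivative u' and weak second derivative u'': u is C^1 on [a,b] with derivative u',
  u' is absolutely continuous, namely the indefinite integral of u'', and u'' is in L^2.\<close>
definition H2_on :: "real \<Rightarrow> real \<Rightarrow> (real \<Rightarrow> real) \<Rightarrow> (real \<Rightarrow> real) \<Rightarrow> (real \<Rightarrow> real) \<Rightarrow> bool" where
  "H2_on a b u u' u'' \<longleftrightarrow>
     (\<forall>t\<in>{a..b}. (u has_real_derivative u' t) (at t within {a..b})) \<and>
     u'' absolutely_integrable_on {a..b} \<and>
     (\<lambda>t. (u'' t)\<^sup>2) integrable_on {a..b} \<and>
     (\<forall>t\<in>{a..b}. u' t = u' a + integral {a..t} u'')"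

definition tangent_angle :: "real \<Rightarrow> real \<Rightarrow> real" where
  "tangent_angle dx dy = Arg (Complex dx dy)"

definition fpsi :: "real \<Rightarrow> real" where
  "fpsi \<theta> = integral {0..\<bar>\<theta>\<bar>} (\<lambda>\<phi>. sqrt (cos \<phi>))"

text \<open>Elastic energy int kappa^2 ds, with kappa = (x'y''-y'x'')/|gamma'|^3 and ds = |gamma'| dt.\<close>
definition elastic_energy ::
  "real \<Rightarrow> real \<Rightarrow> (real \<Rightarrow> real) \<Rightarrow> (real \<Rightarrow> real) \<Rightarrow> (real \<Rightarrow> real) \<Rightarrow> (real \<Rightarrow> real) \<Rightarrow> real" where
  "elastic_energy a b x' y' x'' y'' =
     integral {a..b} (\<lambda>t. ((x' t * y'' t - y' t * x'' t) / (sqrt ((x' t)\<^sup>2 + (y' t)\<^sup>2)) ^ 3)\<^sup>2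
                           * sqrt ((x' t)\<^sup>2 + (y' t)\<^sup>2))"

end

theory Submission
  imports Defs
begin

text \<open>
  Let \<open>\<theta>\<close> be the tangent angle and \<open>F\<close> a primitive of \<open>\<phi> \<mapsto> sqrt (cos \<phi>)\<close>.
  Along the curve \<open>(F \<circ> \<theta>)' = sqrt (cos \<theta>) \<theta>'\<close>, and since \<open>x' \<ge> 0\<close> forces
  \<open>\<bar>\<theta>\<bar> \<le> pi / 2\<close> and \<open>cos \<theta> = x' / \<bar>\<gamma>'\<bar>\<close>, its square is \<open>\<kappa>\<^sup>2 \<bar>\<gamma>'\<bar> \<cdot> x'\<close>.
  Cauchy--Schwarz on \<open>[a, t0]\<close> therefore gives
  \<open>(F (\<theta> t0) - F (\<theta> a))\<^sup>2 \<le> E\<^sub>1 (x t0 - x a)\<close>, with \<open>E\<^sub>1\<close> the energy of that piece,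
  and similarly on \<open>[t0, b]\<close>. As \<open>\<theta> t0 = 0\<close>, the left-hand sides are \<open>f (\<theta> a)\<^sup>2\<close> and
  \<open>f (\<theta> b)\<^sup>2\<close>, and the two halves combine by \<open>(p + q)\<^sup>2 / (X + Y) \<le> E\<^sub>1 + E\<^sub>2\<close>
  whenever \<open>p\<^sup>2 \<le> E\<^sub>1 X\<close> and \<open>q\<^sup>2 \<le> E\<^sub>2 Y\<close>.

  For an \<open>H\<^sup>2\<close> curve, \<open>F \<circ> \<theta>\<close> is only absolutely continuous, so the fundamental theorem
  of calculus for it is proved as a chain rule along absolutely continuous curves.
\<close>

(* HOL-Analysis also exports the content of a polynomial under this name. *)
hide_const (open) Polynomial.content

section \<open>Integrals along absolutely continuous curves\<close>

lemma has_integral_Complex: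
  assumes "(f has_integral I) S" "(g has_integral J) S"
  shows "((\<lambda>t. Complex (f t) (g t)) has_integral Complex I J) S"
  by (rule has_integral_componentwise) (use assms in \<open>auto simp: Basis_complex_def\<close>)

lemma absolutely_integrable_Complex:
  assumes "f absolutely_integrable_on S" "g absolutely_integrable_on S"
  shows "(\<lambda>t. Complex (f t) (g t)) absolutely_integrable_on S"
  by (rule absolutely_integrable_componentwise) (use assms in \<open>auto simp: Basis_complex_def\<close>)

lemma has_integral_increment_norm_le:
  fixes g z :: "real \<Rightarrow> 'a::euclidean_space"
  assumes g: "g absolutely_integrable_on {c..d}"
    and z: "\<And>s t. c \<le> s \<Longrightarrow> s \<le> t \<Longrightarrow> t \<le> d \<Longrightarrow> (g has_integral z t - z s) {s..t}"
    and "c \<le> s" "s \<le> t" "t \<le> d"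
  shows "norm (z t - z s) \<le> integral {c..t} (\<lambda>r. norm (g r)) - integral {c..s} (\<lambda>r. norm (g r))"
proof -
  have g_int: "g integrable_on {c..d}" and ng_int: "(\<lambda>r. norm (g r)) integrable_on {c..d}"
    using g by (auto simp: absolutely_integrable_on_def)
  have "{s..t} \<subseteq> {c..d}" using assms(3-5) by auto
  then have "norm (integral {s..t} g) \<le> integral {s..t} (\<lambda>r. norm (g r))"
    by (intro integral_norm_bound_integral integrable_on_subinterval[OF g_int]
        integrable_on_subinterval[OF ng_int]) auto
  then show ?thesis
    using z[OF assms(3-5)] Henstock_Kurzweil_Integration.integral_combine[OF assms(3,4)
        integrable_on_subinterval[OF ng_int, of c t]] assms(5)
    by (simp add: integral_unique)
qed

lemma has_integral_increment_continuous_on: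
  fixes g z :: "real \<Rightarrow> 'a::banach"
  assumes "g integrable_on {c..d}"
    and z: "\<And>t. c \<le> t \<Longrightarrow> t \<le> d \<Longrightarrow> (g has_integral z t - z c) {c..t}"
  shows "continuous_on {c..d} z"
proof -
  have "continuous_on {c..d} (\<lambda>t. z c + integral {c..t} g)"
    by (intro continuous_intros indefinite_integral_continuous_1 assms(1))
  moreover have "z c + integral {c..t} g = z t" if "t \<in> {c..d}" for t
    using integral_unique[OF z[of t]] that by simp
  ultimately show ?thesis by (rule continuous_on_eq)
qed

lemma continuous_on_has_derivative_gauge:
  fixes z :: "real \<Rightarrow> 'a::real_normed_vector" and \<Phi> :: "'a \<Rightarrow> 'b::real_normed_vector"
  assumes z: "continuous_on S z" and \<Phi>: "\<And>t. t \<in> S \<Longrightarrow> (\<Phi> has_derivative L t) (at (z t))"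
    and "\<eta> > 0"
  obtains \<gamma> where "gauge \<gamma>"
    "\<And>t s. t \<in> S \<Longrightarrow> s \<in> S \<Longrightarrow> s \<in> \<gamma> t \<Longrightarrow>
       norm (\<Phi> (z s) - \<Phi> (z t) - L t (z s - z t)) \<le> \<eta> * norm (z s - z t)"
proof -
  have "\<exists>r>0. \<forall>s\<in>S. dist t s < r \<longrightarrow>
      norm (\<Phi> (z s) - \<Phi> (z t) - L t (z s - z t)) \<le> \<eta> * norm (z s - z t)" if t: "t \<in> S" for t
  proof -
    obtain \<delta> where "\<delta> > 0" and \<delta>: "\<And>w. norm (w - z t) < \<delta> \<Longrightarrow>
        norm (\<Phi> w - \<Phi> (z t) - L t (w - z t)) \<le> \<eta> * norm (w - z t)"
      using \<Phi>[OF t] \<open>\<eta> > 0\<close> unfolding has_derivative_at_alt by blast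
    moreover obtain r where "r > 0" "\<And>s. s \<in> S \<Longrightarrow> dist s t < r \<Longrightarrow> dist (z s) (z t) < \<delta>"
      using z t \<open>\<delta> > 0\<close> unfolding continuous_on_iff by blast
    ultimately show ?thesis by (metis dist_commute dist_norm)
  qed
  then obtain r where r_pos: "\<And>t. t \<in> S \<Longrightarrow> r t > 0" and r: "\<And>t s. t \<in> S \<Longrightarrow> s \<in> S \<Longrightarrow>
      dist t s < r t \<Longrightarrow> norm (\<Phi> (z s) - \<Phi> (z t) - L t (z s - z t)) \<le> \<eta> * norm (z s - z t)"
    by metis
  show thesis
  proof
    show "gauge (\<lambda>t. ball t (if t \<in> S then r t else 1))"
      using r_pos by (intro gauge_ball_dependent) auto
  qed (use r in auto)
qed

lemma linear_approximation_increment_le: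
  fixes \<Phi> :: "'a::real_normed_vector \<Rightarrow> 'b::real_normed_vector"
  assumes "bounded_linear L" "\<And>h. norm (L h) \<le> M * norm h"
    and "norm (\<Phi> v - \<Phi> t - L (v - t)) \<le> \<eta> * norm (v - t)"
    and "norm (\<Phi> u - \<Phi> t - L (u - t)) \<le> \<eta> * norm (u - t)"
  shows "norm (c *\<^sub>R L g - (\<Phi> v - \<Phi> u)) \<le> M * norm (c *\<^sub>R g - (v - u)) + \<eta> * (norm (v - t) + norm (u - t))"
proof -
  interpret bounded_linear L by fact
  have "c *\<^sub>R L g - (\<Phi> v - \<Phi> u) = L (c *\<^sub>R g - (v - u)) - (\<Phi> v - \<Phi> t - L (v - t)) + (\<Phi> u - \<Phi> t - L (u - t))"
    by (simp add: diff add scaleR algebra_simps)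
  also have "norm \<dots> \<le> norm (L (c *\<^sub>R g - (v - u))) + norm (\<Phi> v - \<Phi> t - L (v - t)) + norm (\<Phi> u - \<Phi> t - L (u - t))"
    by (rule order_trans[OF norm_triangle_ineq add_right_mono[OF norm_triangle_ineq4]])
  finally show ?thesis
    using assms(2)[of "c *\<^sub>R g - (v - u)"] assms(3,4) unfolding distrib_left by linarith
qed

text \<open>
  The curve \<open>z\<close> need not be differentiable at any given point, so this is proved from the
  gauge definition of the integral: Henstock's lemma controls the Riemann sums of \<open>g\<close>, and the
  differentiability of \<open>\<Phi>\<close> at \<open>z t\<close> controls the remainder on each tagged interval.
\<close>

lemma has_integral_chain_rule_absolutely_continuous:
  fixes z g :: "real \<Rightarrow> 'a::euclidean_space" and \<Phi> :: "'a \<Rightarrow> 'b::real_normed_vector"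
    and L :: "real \<Rightarrow> 'a \<Rightarrow> 'b"
  assumes "c \<le> d" and g: "g absolutely_integrable_on {c..d}"
    and z: "\<And>s t. c \<le> s \<Longrightarrow> s \<le> t \<Longrightarrow> t \<le> d \<Longrightarrow> (g has_integral z t - z s) {s..t}"
    and \<Phi>: "\<And>t. t \<in> {c..d} \<Longrightarrow> (\<Phi> has_derivative L t) (at (z t))"
    and L: "\<And>t h. t \<in> {c..d} \<Longrightarrow> norm (L t h) \<le> M * norm h"
  shows "((\<lambda>t. L t (g t)) has_integral \<Phi> (z d) - \<Phi> (z c)) {c..d}"
  unfolding has_integral cbox_interval[symmetric]
proof (intro allI impI)
  fix e :: real assume "e > 0"
  have g_int: "g integrable_on {c..d}"
    using g by (auto simp: absolutely_integrable_on_def)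
  define V where "V t = integral {c..t} (\<lambda>r. norm (g r))" for t
  have z_increment: "norm (z t - z s) \<le> V t - V s" if "c \<le> s" "s \<le> t" "t \<le> d" for s t
    unfolding V_def using has_integral_increment_norm_le[OF g z that] .
  have "V c \<le> V d" using z_increment[of c d] \<open>c \<le> d\<close> norm_ge_zero[of "z d - z c"] by linarith
  define M' where "M' = \<bar>M\<bar> + 1"
  define \<epsilon> where "\<epsilon> = e / (2 * M')"
  define \<eta> where "\<eta> = e / (2 * (V d - V c + 1))"
  have "M' > 0" by (simp add: M'_def)
  moreover have "V d - V c + 1 > 0" using \<open>V c \<le> V d\<close> by linarith
  ultimately have "\<epsilon> > 0" "\<eta> > 0" using \<open>e > 0\<close> by (simp_all add: \<epsilon>_def \<eta>_def)
  obtain \<gamma>\<^sub>1 where "gauge \<gamma>\<^sub>1" and \<gamma>\<^sub>1: "\<And>p. p tagged_partial_division_of cbox c d \<Longrightarrow> \<gamma>\<^sub>1 fine p \<Longrightarrow>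
      (\<Sum>(t, K)\<in>p. norm (content K *\<^sub>R g t - integral K g)) < \<epsilon>"
    using Henstock_lemma[of g c d \<epsilon>] g_int \<open>\<epsilon> > 0\<close> by (auto simp: cbox_interval)
  have z_cont: "continuous_on {c..d} z"
    by (rule has_integral_increment_continuous_on[OF g_int z[OF order_refl]])
  obtain \<gamma>\<^sub>2 where "gauge \<gamma>\<^sub>2" and \<gamma>\<^sub>2: "\<And>t s. t \<in> {c..d} \<Longrightarrow> s \<in> {c..d} \<Longrightarrow> s \<in> \<gamma>\<^sub>2 t \<Longrightarrow>
      norm (\<Phi> (z s) - \<Phi> (z t) - L t (z s - z t)) \<le> \<eta> * norm (z s - z t)"
    using continuous_on_has_derivative_gauge[OF z_cont \<Phi> \<open>\<eta> > 0\<close>] by blast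
  show "\<exists>\<gamma>. gauge \<gamma> \<and> (\<forall>\<D>. \<D> tagged_division_of cbox c d \<and> \<gamma> fine \<D> \<longrightarrow>
      norm ((\<Sum>(t, K)\<in>\<D>. content K *\<^sub>R L t (g t)) - (\<Phi> (z d) - \<Phi> (z c))) < e)"
  proof (intro exI conjI allI impI)
    show "gauge (\<lambda>t. \<gamma>\<^sub>1 t \<inter> \<gamma>\<^sub>2 t)" using \<open>gauge \<gamma>\<^sub>1\<close> \<open>gauge \<gamma>\<^sub>2\<close> by (rule gauge_Int)
    fix \<D> assume "\<D> tagged_division_of cbox c d \<and> (\<lambda>t. \<gamma>\<^sub>1 t \<inter> \<gamma>\<^sub>2 t) fine \<D>"
    then have \<D>: "\<D> tagged_division_of {c..d}" and "\<gamma>\<^sub>1 fine \<D>" "\<gamma>\<^sub>2 fine \<D>"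
      by (simp_all add: cbox_interval fine_Int)
    have tag: "norm (content K *\<^sub>R L t (g t) - (\<Phi> (z (Sup K)) - \<Phi> (z (Inf K))))
        \<le> M' * norm (content K *\<^sub>R g t - integral K g) + \<eta> * (V (Sup K) - V (Inf K))"
      if tK: "(t, K) \<in> \<D>" for t K
    proof -
      have "t \<in> K" "K \<subseteq> {c..d}" "K \<subseteq> \<gamma>\<^sub>2 t"
        using tagged_division_ofD(2,3)[OF \<D> tK] \<open>\<gamma>\<^sub>2 fine \<D>\<close> tK by (auto simp: fine_def)
      moreover obtain u v where "K = {u..v}"
        using tagged_division_ofD(4)[OF \<D> tK] by (metis cbox_interval)
      ultimately have K: "K = {u..v}" "u \<le> t" "t \<le> v" "c \<le> u" "v \<le> d" "u \<in> \<gamma>\<^sub>2 t" "v \<in> \<gamma>\<^sub>2 t"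
        by auto
      have "norm ((v - u) *\<^sub>R L t (g t) - (\<Phi> (z v) - \<Phi> (z u)))
          \<le> M' * norm ((v - u) *\<^sub>R g t - (z v - z u)) + \<eta> * (norm (z v - z t) + norm (z u - z t))"
      proof (rule linear_approximation_increment_le)
        show "bounded_linear (L t)" by (rule has_derivative_bounded_linear[OF \<Phi>]) (use K in auto)
        show "norm (L t h) \<le> M' * norm h" for h
          using order_trans[OF L mult_right_mono[OF _ norm_ge_zero]] K by (simp add: M'_def)
      qed (use \<gamma>\<^sub>2 K in auto)
      also have "\<dots> \<le> M' * norm ((v - u) *\<^sub>R g t - (z v - z u)) + \<eta> * (V v - V u)"
        using z_increment[of t v] z_increment[of u t] K \<open>\<eta> > 0\<close>
        by (auto simp: norm_minus_commute intro!: mult_left_mono)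
      finally show ?thesis
        using K integral_unique[OF z[of u v]] by simp
    qed
    have "norm ((\<Sum>(t, K)\<in>\<D>. content K *\<^sub>R L t (g t)) - (\<Phi> (z d) - \<Phi> (z c)))
        = norm (\<Sum>(t, K)\<in>\<D>. content K *\<^sub>R L t (g t) - (\<Phi> (z (Sup K)) - \<Phi> (z (Inf K))))"
      using additive_tagged_division_1[OF \<open>c \<le> d\<close> \<D>, of "\<lambda>t. \<Phi> (z t)"]
      by (simp add: sum_subtractf split_def)
    also have "\<dots> \<le> (\<Sum>(t, K)\<in>\<D>. M' * norm (content K *\<^sub>R g t - integral K g) + \<eta> * (V (Sup K) - V (Inf K)))"
      by (rule sum_norm_le) (use tag in auto)
    also have "\<dots> = M' * (\<Sum>(t, K)\<in>\<D>. norm (content K *\<^sub>R g t - integral K g)) + \<eta> * (V d - V c)"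
      using additive_tagged_division_1[OF \<open>c \<le> d\<close> \<D>, of V]
      by (simp add: sum.distrib split_def flip: sum_distrib_left)
    also have "\<dots> < M' * \<epsilon> + \<eta> * (V d - V c + 1)"
    proof (intro add_less_le_mono mult_strict_left_mono mult_left_mono)
      have "\<D> tagged_partial_division_of cbox c d"
        using \<D> by (simp add: tagged_division_of_def cbox_interval)
      then show "(\<Sum>(t, K)\<in>\<D>. norm (content K *\<^sub>R g t - integral K g)) < \<epsilon>"
        using \<gamma>\<^sub>1 \<open>\<gamma>\<^sub>1 fine \<D>\<close> by blast
    qed (use \<open>\<eta> > 0\<close> \<open>M' > 0\<close> in auto)
    also have "\<dots> = e"
      using \<open>V d - V c + 1 > 0\<close> \<open>M' > 0\<close> by (simp add: \<epsilon>_def \<eta>_def field_simps)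
    finally show "norm ((\<Sum>(t, K)\<in>\<D>. content K *\<^sub>R L t (g t)) - (\<Phi> (z d) - \<Phi> (z c))) < e" .
  qed
qed

section \<open>Cauchy--Schwarz type inequalities\<close>

lemma square_le_mult_if_weighted_mean_bound:
  fixes I E X :: real
  assumes "E \<ge> 0" "X \<ge> 0" and bound: "\<And>l. l > 0 \<Longrightarrow> \<bar>I\<bar> \<le> (l * E + X / l) / 2"
  shows "I\<^sup>2 \<le> E * X"
proof (cases "I = 0")
  case True
  then show ?thesis using assms(1,2) by simp
next
  case False
  show ?thesis
  proof (cases "E = 0")
    case True
    have "\<bar>I\<bar> \<le> X * \<bar>I\<bar> / (2 * (X + 1))"
      using bound[of "(X + 1) / \<bar>I\<bar>"] False True assms(2) by (simp add: field_simps)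
    also have "\<dots> < \<bar>I\<bar>"
      using False assms(2) by (simp add: field_simps add_nonneg_pos)
    finally show ?thesis by simp
  next
    case False
    then have "\<bar>I\<bar> \<le> (\<bar>I\<bar> + X * E / \<bar>I\<bar>) / 2"
      using bound[of "\<bar>I\<bar> / E"] \<open>I \<noteq> 0\<close> assms(1) by (simp add: field_simps)
    then have "\<bar>I\<bar> * \<bar>I\<bar> \<le> X * E"
      using \<open>I \<noteq> 0\<close> by (simp add: field_simps)
    then show ?thesis by (simp add: power2_eq_square mult.commute)
  qed
qed

lemma has_integral_square_le_mult:
  fixes D K p :: "real \<Rightarrow> real"
  assumes "(D has_integral I) S" "(K has_integral E) S" "(p has_integral X) S"
    and "\<And>t. t \<in> S \<Longrightarrow> K t \<ge> 0" "\<And>t. t \<in> S \<Longrightarrow> p t \<ge> 0"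
    and "\<And>t. t \<in> S \<Longrightarrow> (D t)\<^sup>2 = K t * p t"
  shows "I\<^sup>2 \<le> E * X"
proof (rule square_le_mult_if_weighted_mean_bound)
  show "E \<ge> 0" "X \<ge> 0" using assms(2-5) has_integral_nonneg by metis+
  fix l :: real assume "l > 0"
  have pointwise: "\<bar>D t\<bar> \<le> (l * K t + p t / l) / 2" if "t \<in> S" for t
  proof -
    have "(l * K t + p t / l)\<^sup>2 - (2 * \<bar>D t\<bar>)\<^sup>2 = (l * K t - p t / l)\<^sup>2"
      using assms(6)[OF that] \<open>l > 0\<close> by (simp add: power2_eq_square field_simps)
    then have "(2 * \<bar>D t\<bar>)\<^sup>2 \<le> (l * K t + p t / l)\<^sup>2"
      by (metis diff_ge_0_iff_ge zero_le_power2)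
    then have "2 * \<bar>D t\<bar> \<le> l * K t + p t / l"
      by (rule power2_le_imp_le) (use assms(4,5)[OF that] \<open>l > 0\<close> in simp)
    then show ?thesis by simp
  qed
  have mean: "((\<lambda>t. (l * K t + p t / l) / 2) has_integral (l * E + X / l) / 2) S"
    by (intro has_integral_divide has_integral_add has_integral_mult_right assms(2,3))
  have "I \<le> (l * E + X / l) / 2"
    by (rule has_integral_le[OF assms(1) mean]) (meson abs_le_D1 pointwise)
  moreover have "- I \<le> (l * E + X / l) / 2"
    by (rule has_integral_le[OF has_integral_neg[OF assms(1)] mean]) (meson abs_le_D2 pointwise)
  ultimately show "\<bar>I\<bar> \<le> (l * E + X / l) / 2" by linarith
qed

lemma add_square_div_add_le:
  fixes f1 f2 E1 E2 X1 X2 :: real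
  assumes "f1 \<ge> 0" "f2 \<ge> 0" "E1 \<ge> 0" "E2 \<ge> 0" "X1 \<ge> 0" "X2 \<ge> 0"
    and "f1\<^sup>2 \<le> E1 * X1" "f2\<^sup>2 \<le> E2 * X2"
  shows "(f1 + f2)\<^sup>2 / (X1 + X2) \<le> E1 + E2"
proof (cases "X1 + X2 = 0")
  case True
  then show ?thesis using assms by simp
next
  case False
  then have "X1 + X2 > 0" using assms by linarith
  have "f1 \<le> sqrt (E1 * X1)" "f2 \<le> sqrt (E2 * X2)"
    using assms real_le_rsqrt by blast+
  then have "(f1 + f2)\<^sup>2 \<le> (sqrt (E1 * X1) + sqrt (E2 * X2))\<^sup>2"
    using assms by (intro power_mono) auto
  also have "\<dots> = E1 * X1 + E2 * X2 + 2 * sqrt ((E1 * X2) * (E2 * X1))"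
    using assms by (simp add: power2_sum real_sqrt_mult mult_ac power_mult_distrib)
  also have "\<dots> \<le> E1 * X1 + E2 * X2 + (E1 * X2 + E2 * X1)"
    using arith_geo_mean_sqrt[of "E1 * X2" "E2 * X1"] assms by simp
  also have "\<dots> = (E1 + E2) * (X1 + X2)" by (simp add: algebra_simps)
  finally show ?thesis using \<open>X1 + X2 > 0\<close> by (simp add: divide_le_eq)
qed

section \<open>A primitive of the square root of the cosine\<close>

text \<open>The base point \<open>-pi\<close> makes the primitive differentiable on the whole range \<open>(-pi, pi)\<close>
  of \<open>Arg\<close> off the negative real axis.\<close>

definition sqrt_cos_primitive :: "real \<Rightarrow> real" where
  "sqrt_cos_primitive \<theta> = integral {-pi..\<theta>} (\<lambda>\<phi>. sqrt (cos \<phi>))"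

lemma sqrt_cos_primitive_has_real_derivative:
  assumes "-pi < \<theta>" "\<theta> < pi"
  shows "(sqrt_cos_primitive has_real_derivative sqrt (cos \<theta>)) (at \<theta>)"
proof -
  have "continuous_on {-pi..pi} (\<lambda>\<phi>. sqrt (cos \<phi>))" by (intro continuous_intros)
  then have "(sqrt_cos_primitive has_real_derivative sqrt (cos \<theta>)) (at \<theta> within {-pi..pi})"
    unfolding sqrt_cos_primitive_def using assms by (intro integral_has_real_derivative) auto
  then have "(sqrt_cos_primitive has_real_derivative sqrt (cos \<theta>)) (at \<theta> within {-pi<..<pi})"
    by (rule has_field_derivative_subset) auto
  then show ?thesis using at_within_open[of \<theta> "{-pi<..<pi}"] assms by simp
qed

lemma fpsi_eq_abs_sqrt_cos_primitive_diff:
  assumes "\<bar>\<theta>\<bar> \<le> pi / 2"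
  shows "fpsi \<theta> = \<bar>sqrt_cos_primitive \<theta> - sqrt_cos_primitive 0\<bar>"
proof -
  have int: "(\<lambda>\<phi>. sqrt (cos \<phi>)) integrable_on {u..v}" for u v
    by (intro integrable_continuous_interval continuous_intros)
  have split: "sqrt_cos_primitive v = sqrt_cos_primitive u + integral {u..v} (\<lambda>\<phi>. sqrt (cos \<phi>))"
    if "-pi \<le> u" "u \<le> v" for u v
    unfolding sqrt_cos_primitive_def
    by (rule Henstock_Kurzweil_Integration.integral_combine[symmetric]) (use that int in auto)
  have nonneg: "0 \<le> integral {0..\<bar>\<theta>\<bar>} (\<lambda>\<phi>. sqrt (cos \<phi>))"
    by (rule integral_nonneg[OF int]) (use assms in \<open>auto intro!: cos_ge_zero\<close>)
  show ?thesis
  proof (cases "\<theta> \<ge> 0")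
    case True
    then show ?thesis using split[of 0 \<theta>] nonneg by (simp add: fpsi_def)
  next
    case False
    have "integral {\<theta>..0} (\<lambda>\<phi>. sqrt (cos \<phi>)) = integral {0..-\<theta>} (\<lambda>\<phi>. sqrt (cos \<phi>))"
      using Henstock_Kurzweil_Integration.integral_reflect_real[of "-\<theta>" 0 "\<lambda>\<phi>. sqrt (cos \<phi>)"]
      by simp
    moreover have "-pi \<le> \<theta>" using assms pi_gt_zero by linarith
    ultimately show ?thesis using False split[of \<theta> 0] nonneg by (simp add: fpsi_def)
  qed
qed

lemma has_derivative_sqrt_cos_primitive_Arg:
  assumes "w \<notin> \<real>\<^sub>\<le>\<^sub>0"
  shows "((\<lambda>w. sqrt_cos_primitive (Arg w)) has_derivative (\<lambda>h. sqrt (cos (Arg w)) * Im (h / w))) (at w)"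
proof -
  have "w \<noteq> 0" using assms by auto
  have "((\<lambda>w. Im (Ln w)) has_derivative (\<lambda>h. Im (inverse w * h))) (at w)"
    by (rule has_derivative_Im[OF has_field_derivative_imp_has_derivative[OF has_field_derivative_Ln[OF assms]]])
  then have "(Arg has_derivative (\<lambda>h. Im (h / w))) (at w)"
    unfolding divide_inverse mult.commute[of _ "inverse w"]
    by (rule has_derivative_transform_within_open[where s="-{0}"]) (use \<open>w \<noteq> 0\<close> in \<open>auto simp: Arg_eq_Im_Ln\<close>)
  moreover have "-pi < Arg w" "Arg w < pi"
    using Arg_bounded[of w] Arg_eq_pi_iff[of w] assms by (auto simp: complex_nonpos_Reals_iff complex_is_Real_iff)
  then have "(sqrt_cos_primitive has_derivative (\<lambda>h. sqrt (cos (Arg w)) * h)) (at (Arg w))"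
    by (intro has_field_derivative_imp_has_derivative sqrt_cos_primitive_has_real_derivative)
  ultimately show ?thesis by (rule has_derivative_compose)
qed

lemma abs_tangent_angle_le: "p \<ge> 0 \<Longrightarrow> \<bar>tangent_angle p q\<bar> \<le> pi / 2"
  using Arg_Re_nonneg[of "Complex p q"] by (simp add: tangent_angle_def)

lemma tangent_angle_horizontal: "p \<ge> 0 \<Longrightarrow> tangent_angle p 0 = 0"
  using Arg_of_real[of p] by (simp add: tangent_angle_def complex_of_real_def)

section \<open>Sobolev functions\<close>

lemma continuous_on_Icc_nonneg_if_Ioo_nonneg:
  fixes f :: "real \<Rightarrow> real"
  assumes "a < b" "continuous_on {a..b} f" "\<And>t. t \<in> {a<..<b} \<Longrightarrow> f t \<ge> 0" "t \<in> {a..b}"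
  shows "f t \<ge> 0"
  using continuous_ge_on_closure[of "{a<..<b}" f t 0] assms
  unfolding closure_greaterThanLessThan[OF \<open>a < b\<close>] by blast

lemma H2_on_has_integral_increment:
  assumes "H2_on a b u u' u''" "a \<le> s" "s \<le> t" "t \<le> b"
  shows "(u'' has_integral u' t - u' s) {s..t}"
proof -
  have int: "u'' integrable_on {a..b}"
    using assms(1) set_lebesgue_integral_eq_integral(1) unfolding H2_on_def by blast
  have u': "\<And>r. r \<in> {a..b} \<Longrightarrow> u' r = u' a + integral {a..r} u''"
    using assms(1) unfolding H2_on_def by blast
  have "integral {a..s} u'' + integral {s..t} u'' = integral {a..t} u''"
    by (rule Henstock_Kurzweil_Integration.integral_combine)
       (use assms(2,3) integrable_on_subinterval[OF int, of a t] assms(4) in auto)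
  moreover have "u'' integrable_on {s..t}"
    by (rule integrable_on_subinterval[OF int]) (use assms(2,4) in auto)
  ultimately show ?thesis
    using u'[of s] u'[of t] assms(2-4) by (simp add: has_integral_integrable_integral)
qed

lemma H2_on_continuous_derivative:
  assumes "H2_on a b u u' u''"
  shows "continuous_on {a..b} u'"
proof -
  have "u'' integrable_on {a..b}"
    using assms set_lebesgue_integral_eq_integral(1) unfolding H2_on_def by blast
  then have "continuous_on {a..b} (\<lambda>t. u' a + integral {a..t} u'')"
    by (intro continuous_intros indefinite_integral_continuous_1)
  moreover have "\<And>t. t \<in> {a..b} \<Longrightarrow> u' a + integral {a..t} u'' = u' t"
    using assms unfolding H2_on_def by (metis (no_types))
  ultimately show ?thesis by (rule continuous_on_eq)
qed

lemma H2_on_has_integral_derivative: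
  assumes "H2_on a b u u' u''" "a \<le> b"
  shows "(u' has_integral u b - u a) {a..b}"
proof (rule fundamental_theorem_of_calculus[OF assms(2)])
  fix t assume "t \<in> {a..b}"
  then have "(u has_real_derivative u' t) (at t within {a..b})"
    using assms(1) unfolding H2_on_def by blast
  then show "(u has_vector_derivative u' t) (at t within {a..b})"
    by (simp add: has_real_derivative_iff_has_vector_derivative)
qed

lemma H2_on_increasing:
  assumes "H2_on a b u u' u''" "a \<le> b" "\<forall>t\<in>{a..b}. u' t \<ge> 0"
  shows "u a \<le> u b"
  using has_integral_nonneg[OF H2_on_has_integral_derivative[OF assms(1,2)]] assms(3) by auto

lemma H2_on_subinterval:
  assumes "H2_on a b u u' u''" "a \<le> c" "c \<le> d" "d \<le> b"
  shows "H2_on c d u u' u''"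
  unfolding H2_on_def
proof (intro conjI ballI)
  have sub: "{c..d} \<subseteq> {a..b}" using assms(2-4) by auto
  fix t assume t: "t \<in> {c..d}"
  have "(u has_real_derivative u' t) (at t within {a..b})"
    using assms(1) t sub unfolding H2_on_def by blast
  then show "(u has_real_derivative u' t) (at t within {c..d})"
    by (rule has_field_derivative_subset[OF _ sub])
  have "(u'' has_integral u' t - u' c) {c..t}"
    using H2_on_has_integral_increment[OF assms(1), of c t] assms(2,4) t by simp
  then show "u' t = u' c + integral {c..t} u''" by (simp add: integral_unique)
next
  have sub: "{c..d} \<subseteq> {a..b}" using assms(2-4) by auto
  show "u'' absolutely_integrable_on {c..d}"
    using assms(1) absolutely_integrable_on_subinterval[OF _ sub] unfolding H2_on_def by blast
  show "(\<lambda>t. (u'' t)\<^sup>2) integrable_on {c..d}"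
    using assms(1) integrable_on_subinterval[OF _ sub] unfolding H2_on_def by blast
qed

definition elastic_density :: "real \<Rightarrow> real \<Rightarrow> real \<Rightarrow> real \<Rightarrow> real" where
  "elastic_density p q r s = ((p * s - q * r) / sqrt (p\<^sup>2 + q\<^sup>2) ^ 3)\<^sup>2 * sqrt (p\<^sup>2 + q\<^sup>2)"

lemma elastic_energy_eq_integral_density:
  "elastic_energy a b x' y' x'' y'' = integral {a..b} (\<lambda>t. elastic_density (x' t) (y' t) (x'' t) (y'' t))"
  by (simp add: elastic_energy_def elastic_density_def)

lemma elastic_density_nonneg: "elastic_density p q r s \<ge> 0"
  by (simp add: elastic_density_def)

lemma elastic_density_le:
  assumes "0 < m" "m \<le> sqrt (p\<^sup>2 + q\<^sup>2)"
  shows "elastic_density p q r s \<le> (r\<^sup>2 + s\<^sup>2) / m ^ 3"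
proof -
  define n where "n = sqrt (p\<^sup>2 + q\<^sup>2)"
  have "n > 0" using assms unfolding n_def by linarith
  have "n\<^sup>2 * (r\<^sup>2 + s\<^sup>2) - (p * s - q * r)\<^sup>2 = (p * r + q * s)\<^sup>2"
    by (simp add: n_def power2_eq_square algebra_simps)
  then have Lagrange: "(p * s - q * r)\<^sup>2 \<le> n\<^sup>2 * (r\<^sup>2 + s\<^sup>2)"
    by (metis diff_ge_0_iff_ge zero_le_power2)
  have "elastic_density p q r s = (p * s - q * r)\<^sup>2 / n ^ 5"
    using \<open>n > 0\<close> by (simp add: elastic_density_def flip: n_def) (simp add: field_simps eval_nat_numeral)
  also have "\<dots> \<le> n\<^sup>2 * (r\<^sup>2 + s\<^sup>2) / n ^ 5"
    using Lagrange \<open>n > 0\<close> by (simp add: divide_right_mono)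
  also have "\<dots> = (r\<^sup>2 + s\<^sup>2) / n ^ 3"
    using \<open>n > 0\<close> by (simp add: field_simps eval_nat_numeral)
  also have "\<dots> \<le> (r\<^sup>2 + s\<^sup>2) / m ^ 3"
    using assms \<open>n > 0\<close> by (intro divide_left_mono power_mono mult_pos_pos) (auto simp: n_def)
  finally show ?thesis .
qed

lemma sqrt_cos_Arg_mult_Im_divide_square:
  assumes "p \<ge> 0" "p\<^sup>2 + q\<^sup>2 > 0"
  shows "(sqrt (cos (Arg (Complex p q))) * Im (Complex r s / Complex p q))\<^sup>2
    = elastic_density p q r s * p"
proof -
  define n where "n = sqrt (p\<^sup>2 + q\<^sup>2)"
  have "n > 0" using assms by (simp add: n_def)
  have "Complex p q \<noteq> 0" using assms by (auto simp: complex_eq_iff)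
  then have "cos (Arg (Complex p q)) = p / n"
    by (simp add: cos_Arg complex_norm n_def)
  moreover have "Im (Complex r s / Complex p q) = (p * s - q * r) / n\<^sup>2"
    using assms by (simp add: n_def Im_divide algebra_simps)
  ultimately show ?thesis
    using \<open>n > 0\<close> assms(1)
    by (simp add: elastic_density_def power_mult_distrib power_divide flip: n_def)
       (simp add: field_simps eval_nat_numeral)
qed

lemma norm_sqrt_cos_Arg_mult_Im_divide_le:
  assumes "Re w \<ge> 0" "0 < m" "m \<le> norm w"
  shows "norm (sqrt (cos (Arg w)) * Im (h / w)) \<le> 1 / m * norm h"
proof -
  have "\<bar>Arg w\<bar> \<le> pi / 2" using assms(1) Arg_Re_nonneg by blast
  then have "0 \<le> cos (Arg w)" by (intro cos_ge_zero) auto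
  then have "\<bar>sqrt (cos (Arg w))\<bar> \<le> 1" by simp
  moreover have "\<bar>Im (h / w)\<bar> \<le> norm h / m"
  proof -
    have "\<bar>Im (h / w)\<bar> \<le> norm h / norm w"
      using abs_Im_le_cmod[of "h / w"] by (simp add: norm_divide)
    also have "\<dots> \<le> norm h / m"
      using assms(2,3) by (intro divide_left_mono mult_pos_pos) auto
    finally show ?thesis .
  qed
  ultimately have "\<bar>sqrt (cos (Arg w))\<bar> * \<bar>Im (h / w)\<bar> \<le> 1 * (norm h / m)"
    by (intro mult_mono) auto
  then show ?thesis by (simp add: abs_mult)
qed

lemma H2_on_speed_lower_bound:
  assumes "c \<le> d" "H2_on c d x x' x''" "H2_on c d y y' y''"
    and "\<forall>t\<in>{c..d}. (x' t)\<^sup>2 + (y' t)\<^sup>2 > 0"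
  obtains m where "m > 0" "\<And>t. t \<in> {c..d} \<Longrightarrow> m \<le> sqrt ((x' t)\<^sup>2 + (y' t)\<^sup>2)"
proof -
  have "continuous_on {c..d} (\<lambda>t. sqrt ((x' t)\<^sup>2 + (y' t)\<^sup>2))"
    using H2_on_continuous_derivative[OF assms(2)] H2_on_continuous_derivative[OF assms(3)]
    by (intro continuous_intros)
  then have "\<exists>t\<^sub>0\<in>{c..d}. \<forall>t\<in>{c..d}. sqrt ((x' t\<^sub>0)\<^sup>2 + (y' t\<^sub>0)\<^sup>2) \<le> sqrt ((x' t)\<^sup>2 + (y' t)\<^sup>2)"
    using assms(1) by (intro continuous_attains_inf) auto
  then show ?thesis using that assms(4) by (meson real_sqrt_gt_0_iff)
qed

lemma elastic_density_integrable:
  assumes "c \<le> d" and x: "H2_on c d x x' x''" and y: "H2_on c d y y' y''"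
    and regular: "\<forall>t\<in>{c..d}. (x' t)\<^sup>2 + (y' t)\<^sup>2 > 0"
  shows "(\<lambda>t. elastic_density (x' t) (y' t) (x'' t) (y'' t)) integrable_on {c..d}"
proof -
  obtain m where "m > 0" and m: "\<And>t. t \<in> {c..d} \<Longrightarrow> m \<le> sqrt ((x' t)\<^sup>2 + (y' t)\<^sup>2)"
    using H2_on_speed_lower_bound[OF assms] by blast
  have [measurable]: "x' \<in> borel_measurable (lebesgue_on {c..d})" "y' \<in> borel_measurable (lebesgue_on {c..d})"
    using H2_on_continuous_derivative[OF x] H2_on_continuous_derivative[OF y]
    by (auto intro: continuous_imp_measurable_on_sets_lebesgue)
  have "x'' integrable_on {c..d}" "y'' integrable_on {c..d}"
    using x y set_lebesgue_integral_eq_integral(1) unfolding H2_on_def by blast+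
  then have [measurable]: "x'' \<in> borel_measurable (lebesgue_on {c..d})" "y'' \<in> borel_measurable (lebesgue_on {c..d})"
    by (auto intro: integrable_imp_measurable)
  show ?thesis
  proof (rule measurable_bounded_by_integrable_imp_integrable)
    show "(\<lambda>t. elastic_density (x' t) (y' t) (x'' t) (y'' t)) \<in> borel_measurable (lebesgue_on {c..d})"
      unfolding elastic_density_def by measurable
    show "(\<lambda>t. ((x'' t)\<^sup>2 + (y'' t)\<^sup>2) / m ^ 3) integrable_on {c..d}"
    proof (intro integrable_on_divide integrable_add)
      show "(\<lambda>t. (x'' t)\<^sup>2) integrable_on {c..d}" "(\<lambda>t. (y'' t)\<^sup>2) integrable_on {c..d}"
        using x y unfolding H2_on_def by blast+
    qed
    show "norm (elastic_density (x' t) (y' t) (x'' t) (y'' t)) \<le> ((x'' t)\<^sup>2 + (y'' t)\<^sup>2) / m ^ 3"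
      if "t \<in> {c..d}" for t
      using elastic_density_le[OF \<open>m > 0\<close> m[OF that]] elastic_density_nonneg by simp
  qed auto
qed

lemma elastic_energy_nonneg: "elastic_energy a b x' y' x'' y'' \<ge> 0"
  unfolding elastic_energy_eq_integral_density
  by (cases "(\<lambda>t. elastic_density (x' t) (y' t) (x'' t) (y'' t)) integrable_on {a..b}")
     (simp_all add: integral_nonneg elastic_density_nonneg not_integrable_integral)

lemma elastic_energy_split:
  assumes "a \<le> t\<^sub>0" "t\<^sub>0 \<le> b" "H2_on a b x x' x''" "H2_on a b y y' y''"
    and "\<forall>t\<in>{a..b}. (x' t)\<^sup>2 + (y' t)\<^sup>2 > 0"
  shows "elastic_energy a b x' y' x'' y'' = elastic_energy a t\<^sub>0 x' y' x'' y'' + elastic_energy t\<^sub>0 b x' y' x'' y''"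
  unfolding elastic_energy_eq_integral_density
  using elastic_density_integrable[of a b] assms
  by (intro Henstock_Kurzweil_Integration.integral_combine[symmetric]) auto

lemma sqrt_cos_primitive_tangent_angle_increment_square_le:
  assumes "c \<le> d" and x: "H2_on c d x x' x''" and y: "H2_on c d y y' y''"
    and regular: "\<forall>t\<in>{c..d}. (x' t)\<^sup>2 + (y' t)\<^sup>2 > 0" and forward: "\<forall>t\<in>{c..d}. x' t \<ge> 0"
  shows "(sqrt_cos_primitive (tangent_angle (x' d) (y' d)) - sqrt_cos_primitive (tangent_angle (x' c) (y' c)))\<^sup>2
    \<le> elastic_energy c d x' y' x'' y'' * (x d - x c)"
proof -
  define z where "z t = Complex (x' t) (y' t)" for t
  define g where "g = (\<lambda>t. Complex (x'' t) (y'' t))"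
  define D where "D t = sqrt (cos (Arg (z t))) * Im (g t / z t)" for t
  obtain m where "m > 0" and m: "\<And>t. t \<in> {c..d} \<Longrightarrow> m \<le> norm (z t)"
    using H2_on_speed_lower_bound[OF \<open>c \<le> d\<close> x y regular] by (metis z_def complex_norm)
  have slit: "z t \<notin> \<real>\<^sub>\<le>\<^sub>0" if "t \<in> {c..d}" for t
  proof -
    have "x' t \<noteq> 0 \<or> y' t \<noteq> 0" using regular that by force
    moreover have "x' t \<ge> 0" using forward that by blast
    ultimately show ?thesis by (auto simp: z_def complex_nonpos_Reals_iff)
  qed
  have "(D has_integral sqrt_cos_primitive (Arg (z d)) - sqrt_cos_primitive (Arg (z c))) {c..d}"
    unfolding D_def
  proof (rule has_integral_chain_rule_absolutely_continuous[where M="1 / m"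
        and \<Phi>="\<lambda>w. sqrt_cos_primitive (Arg w)" and L="\<lambda>t h. sqrt (cos (Arg (z t))) * Im (h / z t)"])
    have "x'' absolutely_integrable_on {c..d}" "y'' absolutely_integrable_on {c..d}"
      using x y unfolding H2_on_def by blast+
    then show "g absolutely_integrable_on {c..d}"
      unfolding g_def by (rule absolutely_integrable_Complex)
    show "(g has_integral z t - z s) {s..t}" if "c \<le> s" "s \<le> t" "t \<le> d" for s t
      using has_integral_Complex[OF H2_on_has_integral_increment[OF x that] H2_on_has_integral_increment[OF y that]]
      by (simp add: z_def g_def complex_diff)
    show "((\<lambda>w. sqrt_cos_primitive (Arg w)) has_derivative (\<lambda>h. sqrt (cos (Arg (z t))) * Im (h / z t))) (at (z t))"
      if "t \<in> {c..d}" for t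
      by (rule has_derivative_sqrt_cos_primitive_Arg[OF slit[OF that]])
    show "norm (sqrt (cos (Arg (z t))) * Im (h / z t)) \<le> 1 / m * norm h" if "t \<in> {c..d}" for t h
      using forward that by (intro norm_sqrt_cos_Arg_mult_Im_divide_le \<open>m > 0\<close> m) (auto simp: z_def)
  qed fact
  moreover have "((\<lambda>t. elastic_density (x' t) (y' t) (x'' t) (y'' t)) has_integral elastic_energy c d x' y' x'' y'') {c..d}"
    unfolding elastic_energy_eq_integral_density
    using elastic_density_integrable[OF assms(1-4)] by (rule integrable_integral)
  moreover have "(x' has_integral x d - x c) {c..d}"
    using H2_on_has_integral_derivative[OF x \<open>c \<le> d\<close>] .
  moreover have "(D t)\<^sup>2 = elastic_density (x' t) (y' t) (x'' t) (y'' t) * x' t" if "t \<in> {c..d}" for t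
    unfolding D_def z_def g_def using forward regular that by (intro sqrt_cos_Arg_mult_Im_divide_square) auto
  ultimately show ?thesis
    using forward elastic_density_nonneg unfolding tangent_angle_def z_def
    by (intro has_integral_square_le_mult) auto
qed

theorem lemma1:
  fixes a b t0 :: real and x y x' y' x'' y'' :: "real \<Rightarrow> real"
  assumes "a < b"
    and "H2_on a b x x' x''" and "H2_on a b y y' y''"
    and "\<forall>t\<in>{a..b}. (x' t)\<^sup>2 + (y' t)\<^sup>2 > 0"
    and "\<forall>t\<in>{a<..<b}. x' t \<ge> 0"
    and "t0 \<in> {a<..<b}" and "y' t0 = 0"
  shows "elastic_energy a b x' y' x'' y'' \<ge>
    (fpsi (tangent_angle (x' a) (y' a)) + fpsi (tangent_angle (x' b) (y' b)))\<^sup>2 / (x b - x a)"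
proof -
  note x = assms(2) and y = assms(3) and regular = assms(4)
  have t0: "a \<le> t0" "t0 \<le> b" using assms(6) by auto
  have forward: "\<forall>t\<in>{a..b}. x' t \<ge> 0"
    using continuous_on_Icc_nonneg_if_Ioo_nonneg[OF \<open>a < b\<close> H2_on_continuous_derivative[OF x]] assms(5)
    by blast
  define F where "F t = sqrt_cos_primitive (tangent_angle (x' t) (y' t))" for t
  have F_t0: "F t0 = sqrt_cos_primitive 0"
    using forward t0 assms(7) by (simp add: F_def tangent_angle_horizontal)
  have fpsi: "fpsi (tangent_angle (x' t) (y' t)) = \<bar>F t - F t0\<bar>" if "t \<in> {a..b}" for t
    unfolding F_t0 unfolding F_def
    using forward that by (intro fpsi_eq_abs_sqrt_cos_primitive_diff abs_tangent_angle_le) auto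
  have piece: "(F d - F c)\<^sup>2 \<le> elastic_energy c d x' y' x'' y'' * (x d - x c)" "x c \<le> x d"
    if "a \<le> c" "c \<le> d" "d \<le> b" for c d
    unfolding F_def using that forward regular
      sqrt_cos_primitive_tangent_angle_increment_square_le[of c d x x' x'' y y' y'']
      H2_on_increasing[of c d x x' x''] H2_on_subinterval[OF x that] H2_on_subinterval[OF y that]
    by auto
  have "(\<bar>F t0 - F a\<bar> + \<bar>F b - F t0\<bar>)\<^sup>2 / ((x t0 - x a) + (x b - x t0))
      \<le> elastic_energy a t0 x' y' x'' y'' + elastic_energy t0 b x' y' x'' y''"
    using piece[of a t0] piece[of t0 b] t0 by (intro add_square_div_add_le elastic_energy_nonneg) auto
  then show ?thesis
    using fpsi[of a] fpsi[of b] t0 elastic_energy_split[OF t0 x y regular]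
    by (simp add: abs_minus_commute)
qed

end
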